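(* Let $q\ge1$, $u,v\in\{1,\dots,q\}$, $p_1,p_2\in[0,1]$, and let $X_1\sim\mathrm{Binomial}(u,p_1)$ and $X_2\sim\mathrm{Binomial}(v,p_2)$ be independent. Let $p^*=\min\{\max\{p_1,1-p_1\},\max\{p_2,1-p_2\}\}$. Then $\Pr[X_1\neq X_2]\ge1-\sqrt{p^*}$.
   Context: $\mathrm{Binomial}(n,p)$ is the sum of $n$ i.i.d. $\{0,1\}$-valued random variables each with mean $p$. *)

theory Defs
  imports "HOL-Probability.Probability"
begin

end

theory Submission
  imports Defs
begin

(* Conditioning on the first trial writes each point mass of Binomial(n+1, p) as p times one
   point mass of Binomial(n, p) plus 1 - p times the adjacent one; since those two masses sum
   to at most 1, every point mass of a binomial with at least one trial is at most
   max p (1 - p).  Hence for independent X1, X2 we get Pr[X1 = X2] = sum_k Pr[X1 = k] Pr[X2 = k]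
   <= p*, so even Pr[X1 ~= X2] >= 1 - p* >= 1 - sqrt p*.  Of the bounds on u and v only
   u, v >= 1 matters. *)

lemma pmf_binomial_Suc_Suc:
  assumes "p \<in> {0..1}"
  shows "pmf (binomial_pmf (Suc n) p) (Suc k) =
           p * pmf (binomial_pmf n p) k + (1 - p) * pmf (binomial_pmf n p) (Suc k)"
proof (cases "k < n")
  case True
  then obtain r where "n - k = Suc r" "n - Suc k = r" by (metis Suc_diff_Suc)
  with assms show ?thesis by (simp add: binomial_Suc_Suc algebra_simps)
next
  case False
  with assms show ?thesis by (simp add: binomial_Suc_Suc algebra_simps binomial_eq_0)
qed

lemma pmf_binomial_le_max:
  assumes p: "p \<in> {0..1}" and "n \<ge> 1"
  shows "pmf (binomial_pmf n p) k \<le> max p (1 - p)"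
proof -
  obtain m where n: "n = Suc m" using \<open>n \<ge> 1\<close> by (cases n) auto
  show ?thesis
  proof (cases k)
    case 0
    have "(1 - p) ^ Suc m \<le> 1 - p" using p by (simp add: power_le_one mult_left_le)
    with 0 n p show ?thesis by simp
  next
    case (Suc j)
    let ?B = "binomial_pmf m p" and ?M = "max p (1 - p)"
    have "pmf ?B j + pmf ?B (Suc j) = measure_pmf.prob ?B {j, Suc j}"
      by (subst measure_measure_pmf_finite) auto
    also have "\<dots> \<le> 1" by simp
    finally have two_masses: "pmf ?B j + pmf ?B (Suc j) \<le> 1" .
    have "pmf (binomial_pmf n p) k = p * pmf ?B j + (1 - p) * pmf ?B (Suc j)"
      using pmf_binomial_Suc_Suc[OF p] n Suc by simp
    also have "\<dots> \<le> ?M * pmf ?B j + ?M * pmf ?B (Suc j)"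
      by (intro add_mono mult_right_mono) auto
    also have "\<dots> = ?M * (pmf ?B j + pmf ?B (Suc j))" by (simp add: algebra_simps)
    also have "\<dots> \<le> ?M" using two_masses p by (intro mult_left_le) auto
    finally show ?thesis .
  qed
qed

lemma measure_pair_pmf_diagonal_le:
  fixes A B :: "'a pmf"
  assumes "\<And>k. pmf B k \<le> m"
  shows "measure_pmf.prob (pair_pmf A B) {(x, y). x = y} \<le> m"
proof -
  have "0 \<le> m" using assms[of undefined] pmf_nonneg[of B undefined] by linarith
  have "emeasure (pair_pmf A B) {(x, y). x = y} =
          (\<integral>\<^sup>+a. \<integral>\<^sup>+b. indicator {(x, y). x = y} (a, b) \<partial>B \<partial>A)"
    by (simp add: nn_integral_pair_pmf' flip: nn_integral_indicator)
  also have "\<dots> = (\<integral>\<^sup>+a. emeasure B {a} \<partial>A)"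
  proof (intro nn_integral_cong)
    fix a :: 'a
    have "(\<lambda>b. indicator {(x, y). x = y} (a, b) :: ennreal) = indicator {a}"
      by (auto simp: indicator_def)
    then show "(\<integral>\<^sup>+b. indicator {(x, y). x = y} (a, b) \<partial>B) = emeasure B {a}"
      by simp
  qed
  also have "\<dots> \<le> (\<integral>\<^sup>+a. ennreal m \<partial>A)"
    by (intro nn_integral_mono) (simp add: emeasure_pmf_single assms ennreal_leI)
  also have "\<dots> = ennreal m" by simp
  finally show ?thesis
    using \<open>0 \<le> m\<close> by (simp add: measure_pmf.emeasure_eq_measure)
qed

lemma measure_pair_pmf_diagonal_swap:
  "measure_pmf.prob (pair_pmf A B) {(x, y). x = y} =
     measure_pmf.prob (pair_pmf B A) {(x, y). x = y}"
  by (subst pair_commute_pmf) (auto intro!: arg_cong[where f = "measure_pmf.prob _"])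

lemma le_sqrt_self:
  fixes s :: real
  assumes "0 \<le> s" "s \<le> 1"
  shows "s \<le> sqrt s"
proof -
  have "s = sqrt s * sqrt s" using assms by simp
  also have "\<dots> \<le> sqrt s" using assms by (intro mult_left_le) auto
  finally show ?thesis .
qed

theorem lemma15:
  fixes q u v :: nat and p1 p2 :: real
  assumes "q \<ge> 1" and "u \<in> {1..q}" and "v \<in> {1..q}"
    and "p1 \<in> {0..1}" and "p2 \<in> {0..1}"
  shows "measure_pmf.prob (pair_pmf (binomial_pmf u p1) (binomial_pmf v p2)) {(x1, x2). x1 \<noteq> x2}
           \<ge> 1 - sqrt (min (max p1 (1 - p1)) (max p2 (1 - p2)))"
proof -
  let ?P = "pair_pmf (binomial_pmf u p1) (binomial_pmf v p2)"
  let ?D = "{(x :: nat, y). x = y}"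
  let ?s = "min (max p1 (1 - p1)) (max p2 (1 - p2))"
  have "measure_pmf.prob ?P ?D \<le> max p2 (1 - p2)"
    using assms by (intro measure_pair_pmf_diagonal_le pmf_binomial_le_max) auto
  moreover have "measure_pmf.prob ?P ?D \<le> max p1 (1 - p1)"
    using assms
    by (subst measure_pair_pmf_diagonal_swap)
       (intro measure_pair_pmf_diagonal_le pmf_binomial_le_max, auto)
  ultimately have "measure_pmf.prob ?P ?D \<le> ?s" by simp
  also have "\<dots> \<le> sqrt ?s" using assms by (intro le_sqrt_self) auto
  finally have diagonal: "measure_pmf.prob ?P ?D \<le> sqrt ?s" .
  have "{(x1, x2). x1 \<noteq> x2} = UNIV - ?D" by auto
  then show ?thesis
    using diagonal measure_pmf.prob_compl[of ?D ?P] by simp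
qed

end
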